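(* Let $f:\mathbb R^n\to\mathbb R$ be continuously differentiable and let $\{x^k\}$ be generated by $x^{k+1}=x^k+t_kd^k$ with $t_k\ge0$. Suppose $\inf_k f(x^k)>-\infty$ and: (a) $f$ satisfies the $L$-descent condition for some $L>0$; (b) $\{d^k\}$ is gradient associated with $\{x^k\}$ and satisfies the sufficient descent condition $\langle\nabla f(x^k),d^k\rangle\le-\kappa\|d^k\|^2$ for all $k\in\mathbb N$, for some $\kappa>0$; (c) $\sum_{k=1}^\infty t_k=\infty$ and there are $\delta\in(0,2\kappa)$ and $N\in\mathbb N$ with $t_k\le \frac{2\kappa-\delta}{L}$ for all $k\ge N$. Then every accumulation point of $\{x^k\}$ is a stationary point of $f$; if $\{x^k\}$ is bounded then its set of accumulation points is nonempty, compact and connected; and if $\{x^k\}$ has an isolated accumulation point then $\{x^k\}$ converges to it. Moreover, if $\{t_k\}$ is bounded away from $0$, then $\nabla f(x^k)\to0$ as $k\to\infty$.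
   Context: $f$ satisfies the $L$-descent condition if $f(y)\le f(x)+\langle\nabla f(x),y-x\rangle+\frac L2\|y-x\|^2$ for all $x,y\in\mathbb R^n$. A direction sequence $\{d^k\}$ is called gradient associated with $\{x^k\}$ if for every infinite set $J\subset\mathbb N$, $d^k\to0$ along $J$ implies $\nabla f(x^k)\to 0$ along $J$. *)

theory Defs
  imports "HOL-Analysis.Analysis"
begin

definition L_descent :: "('a::euclidean_space \<Rightarrow> real) \<Rightarrow> ('a \<Rightarrow> 'a) \<Rightarrow> real \<Rightarrow> bool" where
  "L_descent f g L \<longleftrightarrow>
     (\<forall>x y. f y \<le> f x + g x \<bullet> (y - x) + L / 2 * (norm (y - x))\<^sup>2)"

definition gradient_associated :: "('a::euclidean_space \<Rightarrow> 'a) \<Rightarrow> (nat \<Rightarrow> 'a) \<Rightarrow> (nat \<Rightarrow> 'a) \<Rightarrow> bool" where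
  "gradient_associated g x d \<longleftrightarrow>
     (\<forall>J::nat set. infinite J \<longrightarrow>
        (d \<longlongrightarrow> 0) (inf sequentially (principal J)) \<longrightarrow>
        ((\<lambda>k. g (x k)) \<longlongrightarrow> 0) (inf sequentially (principal J)))"

definition acc_points :: "(nat \<Rightarrow> 'a::topological_space) \<Rightarrow> 'a set" where
  "acc_points x = {p. \<exists>r. strict_mono r \<and> (x \<circ> r) \<longlonglongrightarrow> p}"

end

theory Submission
  imports Defs
begin

(* By the descent inequality and the step size bound, eventually
     f(x_{k+1}) <= f(x_k) - delta/2 * t_k |d_k|^2,
   so the energies t_k |d_k|^2 are summable since f is bounded below along the iterates. As the t_k
   are eventually bounded, the steps x_{k+1} - x_k tend to zero; compactness and connectedness of the
   accumulation set, and convergence to an isolated accumulation point, hold for every bounded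
   sequence with vanishing steps.
   If an accumulation point p had g p ~= 0, the gradients, and hence (by gradient association) the
   directions, would be bounded below by some c > 0 near p. There each step moves at most
   t_k |d_k|^2 / c and t_k <= t_k |d_k|^2 / c^2, so iterates that enter a small ball around p late
   enough are trapped in it by the summable energy, forcing sum t_k < infinity: a contradiction. *)

lemma strict_mono_choice_frequently:
  assumes "\<And>n. \<exists>\<^sub>F k in sequentially. Q n k"
  shows "\<exists>r::nat \<Rightarrow> nat. strict_mono r \<and> (\<forall>n. Q n (r n))"
proof -
  define s where "s n i = (SOME j. j > i \<and> Q n j)" for n i
  have "\<exists>j>i. Q n j" for n i
    using assms[of n] unfolding frequently_sequentially by (meson Suc_le_eq)
  then have s: "i < s n i \<and> Q n (s n i)" for n i
    unfolding s_def by (rule someI_ex)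
  define r where "r = rec_nat (s 0 0) (\<lambda>n. s (Suc n))"
  have "strict_mono r" unfolding strict_mono_Suc_iff by (simp add: r_def s)
  moreover have "Q n (r n)" for n by (cases n) (simp_all add: r_def s)
  ultimately show ?thesis by blast
qed

lemma filtermap_strict_mono_sequentially:
  assumes "strict_mono r"
  shows "filtermap r sequentially = inf sequentially (principal (range r))"
proof (rule filter_eqI)
  fix P
  show "eventually P (filtermap r sequentially) \<longleftrightarrow> eventually P (inf sequentially (principal (range r)))"
    unfolding eventually_filtermap eventually_inf_principal eventually_sequentially
  proof
    assume "\<exists>N. \<forall>n\<ge>N. P (r n)"
    then obtain N where "\<forall>n\<ge>N. P (r n)" by blast
    then show "\<exists>M. \<forall>k\<ge>M. k \<in> range r \<longrightarrow> P k"
      using strict_mono_less_eq[OF assms] by (intro exI[of _ "r N"]) auto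
  next
    assume "\<exists>M. \<forall>k\<ge>M. k \<in> range r \<longrightarrow> P k"
    then show "\<exists>N. \<forall>n\<ge>N. P (r n)"
      using seq_suble[OF assms] le_trans by blast
  qed
qed

lemma tendsto_zero_if_norm_square_le:
  fixes f :: "'b \<Rightarrow> 'a::real_normed_vector"
  assumes "\<forall>\<^sub>F k in F. (norm (f k))\<^sup>2 \<le> b k" "(b \<longlongrightarrow> 0) F"
  shows "(f \<longlongrightarrow> 0) F"
proof -
  have "((\<lambda>k. (norm (f k))\<^sup>2) \<longlongrightarrow> 0) F"
    by (rule Lim_null_comparison[OF _ assms(2)]) (use assms(1) in simp)
  then have "((\<lambda>k. sqrt ((norm (f k))\<^sup>2)) \<longlongrightarrow> sqrt 0) F" by (rule tendsto_real_sqrt)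
  then show ?thesis by (simp add: tendsto_norm_zero_iff)
qed

lemma partial_sums_at_top_imp_not_summable:
  fixes t :: "nat \<Rightarrow> real"
  assumes "filterlim (\<lambda>n. \<Sum>k=1..n. t k) at_top sequentially"
  shows "\<not> summable t"
proof
  assume "summable t"
  then have "(\<lambda>n. (\<Sum>k<Suc n. t k) - t 0) \<longlonglongrightarrow> suminf t - t 0"
    by (intro tendsto_diff LIMSEQ_Suc[OF summable_LIMSEQ] tendsto_const)
  moreover have "(\<Sum>k<Suc n. t k) - t 0 = (\<Sum>k=1..n. t k)" for n
    by (subst sum.lessThan_Suc_shift) (simp add: sum.atLeast1_atMost_eq)
  ultimately have "(\<lambda>n. \<Sum>k=1..n. t k) \<longlonglongrightarrow> suminf t - t 0" by simp
  then show False
    using assms by (auto intro: not_tendsto_and_filterlim_at_infinity filterlim_at_top_imp_at_infinity)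
qed

lemma summable_of_sufficient_decrease:
  fixes u a :: "nat \<Rightarrow> real"
  assumes "bdd_below (range u)" "c > 0" "\<And>k. 0 \<le> a k"
    and decrease: "\<And>k. k \<ge> N \<Longrightarrow> u (Suc k) \<le> u k - c * a k"
  shows "summable a"
proof -
  obtain B where B: "\<And>k. B \<le> u k" using assms(1) unfolding bdd_below_def by blast
  have "c * (\<Sum>i<n. a (i + N)) \<le> u N - B" for n
  proof -
    have "c * (\<Sum>i<n. a (i + N)) \<le> (\<Sum>i<n. u (i + N) - u (Suc i + N))"
      unfolding sum_distrib_left using decrease by (intro sum_mono) (simp add: algebra_simps)
    also have "\<dots> = u N - u (n + N)" using sum_lessThan_telescope'[of "\<lambda>i. u (i + N)" n] by simp
    finally show ?thesis using B[of "n + N"] by linarith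
  qed
  then have "summable (\<lambda>i. a (i + N))"
    using assms(2,3) by (intro summableI_nonneg_bounded[of _ "(u N - B) / c"])
      (auto simp: pos_le_divide_eq mult.commute)
  then show ?thesis by (rule summable_iff_shift[THEN iffD1])
qed

lemma trapped_in_ball:
  fixes x :: "nat \<Rightarrow> 'a::metric_space"
  assumes step: "\<And>k. k \<ge> m \<Longrightarrow> dist (x k) p < \<epsilon> \<Longrightarrow> dist (x (Suc k)) (x k) \<le> s k"
    and s: "\<And>k. 0 \<le> s k" "summable s"
    and start: "dist (x m) p + (\<Sum>i. s (i + m)) < \<epsilon>"
  shows "k \<ge> m \<Longrightarrow> dist (x k) p < \<epsilon>"
proof -
  have tail: "summable (\<lambda>i. s (i + m))" using s(2) by (rule summable_iff_shift[THEN iffD2])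
  have partial: "(\<Sum>i<n. s (i + m)) \<le> (\<Sum>i. s (i + m))" for n
    using tail s(1) by (intro sum_le_suminf) auto
  have "dist (x (n + m)) p < \<epsilon> \<and> dist (x (n + m)) (x m) \<le> (\<Sum>i<n. s (i + m))" for n
  proof (induction n)
    case 0
    then show ?case using start partial[of 0] by simp
  next
    case (Suc n)
    then have "dist (x (Suc n + m)) (x m) \<le> (\<Sum>i<Suc n. s (i + m))"
      using step[of "n + m"] dist_triangle[of "x (Suc n + m)" "x m" "x (n + m)"] by simp
    moreover have "dist (x (Suc n + m)) p \<le> dist (x (Suc n + m)) (x m) + dist (x m) p"
      by (rule dist_triangle)
    ultimately show ?case using start partial[of "Suc n"] by linarith
  qed
  then show "k \<ge> m \<Longrightarrow> dist (x k) p < \<epsilon>" by (metis le_add_diff_inverse2)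
qed


section \<open>Accumulation points of sequences\<close>

lemma acc_points_iff_frequently:
  fixes x :: "nat \<Rightarrow> 'a::metric_space"
  shows "p \<in> acc_points x \<longleftrightarrow> (\<forall>e>0. \<exists>\<^sub>F k in sequentially. dist (x k) p < e)"
proof (rule iffI, intro allI impI)
  fix e :: real assume "p \<in> acc_points x" "e > 0"
  then obtain r where r: "strict_mono r" "(x \<circ> r) \<longlonglongrightarrow> p"
    unfolding acc_points_def by blast
  obtain M where M: "\<And>n. n \<ge> M \<Longrightarrow> dist (x (r n)) p < e"
    using r(2) \<open>e > 0\<close> unfolding lim_sequentially o_def by blast
  show "\<exists>\<^sub>F k in sequentially. dist (x k) p < e"
    unfolding frequently_sequentially
  proof
    fix N
    have "N \<le> r (max N M)" using seq_suble[OF r(1), of "max N M"] by simp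
    then show "\<exists>k\<ge>N. dist (x k) p < e" using M[of "max N M"] by auto
  qed
next
  assume "\<forall>e>0. \<exists>\<^sub>F k in sequentially. dist (x k) p < e"
  then have "\<exists>\<^sub>F k in sequentially. dist (x k) p < inverse (Suc n)" for n
    by simp
  then obtain r where r: "strict_mono r" "\<And>n. dist (x (r n)) p < inverse (Suc n)"
    using strict_mono_choice_frequently[of "\<lambda>n k. dist (x k) p < inverse (Suc n)"] by auto
  have "(\<lambda>n. dist (x (r n)) p) \<longlonglongrightarrow> 0"
    using r(2) by (intro Lim_null_comparison[OF _ LIMSEQ_inverse_real_of_nat] always_eventually)
      (simp add: less_imp_le)
  then have "(x \<circ> r) \<longlonglongrightarrow> p" by (subst tendsto_dist_iff) (simp add: o_def)
  then show "p \<in> acc_points x" unfolding acc_points_def using r(1) by blast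
qed

lemma acc_pointsD:
  fixes x :: "nat \<Rightarrow> 'a::metric_space"
  shows "p \<in> acc_points x \<Longrightarrow> e > 0 \<Longrightarrow> \<exists>\<^sub>F k in sequentially. dist (x k) p < e"
  by (simp add: acc_points_iff_frequently)

lemma closed_acc_points:
  fixes x :: "nat \<Rightarrow> 'a::metric_space"
  shows "closed (acc_points x)"
proof -
  have "p \<in> acc_points x" if p: "p \<in> closure (acc_points x)" for p
    unfolding acc_points_iff_frequently
  proof (intro allI impI)
    fix e :: real assume "e > 0"
    then obtain q where q: "q \<in> acc_points x" "dist q p < e/2"
      using p unfolding closure_approachable by (meson half_gt_zero)
    then have "\<exists>\<^sub>F k in sequentially. dist (x k) q < e/2"
      using \<open>e > 0\<close> by (intro acc_pointsD) auto
    then show "\<exists>\<^sub>F k in sequentially. dist (x k) p < e"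
      by (rule frequently_elim1) (use q(2) in \<open>metis dist_commute dist_triangle_half_l\<close>)
  qed
  then show ?thesis using closure_subset_eq by blast
qed

lemma acc_points_subset_closure:
  fixes x :: "nat \<Rightarrow> 'a::metric_space"
  shows "acc_points x \<subseteq> closure (range x)"
proof
  fix p assume "p \<in> acc_points x"
  then have "\<exists>k. dist (x k) p < e" if "e > 0" for e
    using acc_pointsD that by (blast dest: frequently_ex)
  then show "p \<in> closure (range x)" unfolding closure_approachable by blast
qed

lemma acc_point_in_compact:
  fixes x :: "nat \<Rightarrow> 'a::metric_space"
  assumes K: "compact K" and fr: "\<exists>\<^sub>F k in sequentially. x k \<in> K"
  shows "\<exists>p\<in>K. p \<in> acc_points x"
proof -
  have "infinite {k. x k \<in> K}"
    using fr by (simp add: frequently_cofinite cofinite_eq_sequentially[symmetric])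
  then obtain r :: "nat \<Rightarrow> nat" where r: "strict_mono r" "\<And>n. x (r n) \<in> K"
    using infinite_enumerate by blast
  then obtain p r' where p: "p \<in> K" "strict_mono r'" "((x \<circ> r) \<circ> r') \<longlonglongrightarrow> p"
    using K unfolding compact_def by (metis comp_apply)
  have "strict_mono (r \<circ> r')" using r(1) p(2) by (rule strict_mono_o)
  then have "p \<in> acc_points x"
    using p(3) unfolding acc_points_def by (auto simp: o_assoc)
  then show ?thesis using p(1) by blast
qed

lemma eventually_not_in_compact:
  fixes x :: "nat \<Rightarrow> 'a::metric_space"
  assumes "compact K" "K \<inter> acc_points x = {}"
  shows "\<forall>\<^sub>F k in sequentially. x k \<notin> K"
proof (rule ccontr)
  assume "\<not> ?thesis"
  then have "\<exists>\<^sub>F k in sequentially. x k \<in> K" by (simp add: not_eventually)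
  then show False using acc_point_in_compact[OF assms(1)] assms(2) by blast
qed

lemma compact_acc_points:
  fixes x :: "nat \<Rightarrow> 'a::heine_borel"
  assumes "bounded (range x)"
  shows "compact (acc_points x)"
  using bounded_subset[OF bounded_closure[OF assms] acc_points_subset_closure] closed_acc_points
  by (simp add: compact_eq_bounded_closed)

lemma acc_points_nonempty:
  fixes x :: "nat \<Rightarrow> 'a::heine_borel"
  assumes "bounded (range x)"
  shows "acc_points x \<noteq> {}"
proof -
  have "x k \<in> closure (range x)" for k by (rule closure_subset[THEN subsetD, OF rangeI])
  then have "\<exists>\<^sub>F k in sequentially. x k \<in> closure (range x)" by simp
  moreover have "compact (closure (range x))" using assms by (rule compact_closure[THEN iffD2])
  ultimately show ?thesis using acc_point_in_compact[of "closure (range x)" x] by blast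
qed

lemma eventually_near_acc_points:
  fixes x :: "nat \<Rightarrow> 'a::heine_borel"
  assumes "bounded (range x)" "r > 0"
  shows "\<forall>\<^sub>F k in sequentially. \<exists>a\<in>acc_points x. dist (x k) a < r"
proof -
  let ?K = "closure (range x) - (\<Union>a\<in>acc_points x. ball a r)"
  have "compact ?K"
    using assms(1) by (intro compact_diff compact_closure[THEN iffD2] open_UN ballI open_ball)
  moreover have "?K \<inter> acc_points x = {}" using assms(2) by auto
  ultimately have "\<forall>\<^sub>F k in sequentially. x k \<notin> ?K" by (rule eventually_not_in_compact)
  moreover have "x k \<in> closure (range x)" for k by (rule closure_subset[THEN subsetD, OF rangeI])
  ultimately show ?thesis
    by (elim eventually_mono) (auto simp: dist_commute)
qed

lemma connected_acc_points:
  fixes x :: "nat \<Rightarrow> 'a::heine_borel"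
  assumes bounded: "bounded (range x)"
    and steps: "(\<lambda>k. dist (x (Suc k)) (x k)) \<longlonglongrightarrow> 0"
  shows "connected (acc_points x)"
proof (rule ccontr)
  let ?A = "acc_points x"
  assume "\<not> connected ?A"
  then obtain U V where UV: "closed U" "closed V" "U \<noteq> {}" "V \<noteq> {}" "U \<union> V = ?A" "U \<inter> V = {}"
    using connected_closed_set[OF closed_acc_points[of x]] by auto
  have "U = ?A \<inter> U" using UV(5) by blast
  then have "compact U" using compact_Int_closed[OF compact_acc_points[OF bounded] UV(1)] by simp
  then obtain \<eta> where \<eta>: "\<eta> > 0" "\<And>u v. u \<in> U \<Longrightarrow> v \<in> V \<Longrightarrow> \<eta> \<le> dist u v"
    using separate_compact_closed[OF _ UV(2,6)] by blast
  (* Late iterates are \<eta>/3-close to U or to V and consecutive ones are \<eta>/3-close to each other,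
     so the sequence can never switch sides; yet both U and V are visited infinitely often. *)
  define near where "near S k \<longleftrightarrow> (\<exists>a\<in>S. dist (x k) a < \<eta>/3)" for S k
  have apart: False if "near U k" "near V j" and kj: "dist (x k) (x j) < \<eta>/3" for k j
  proof -
    obtain u v where "u \<in> U" "v \<in> V" "dist (x k) u < \<eta>/3" "dist (x j) v < \<eta>/3"
      using \<open>near U k\<close> \<open>near V j\<close> unfolding near_def by blast
    then have "dist u v < \<eta>"
      using kj dist_triangle[of u v "x k"] dist_triangle[of "x k" v "x j"]
      by (simp add: dist_commute)
    then show False using \<eta>(2) \<open>u \<in> U\<close> \<open>v \<in> V\<close> by fastforce
  qed
  have "\<forall>\<^sub>F k in sequentially. near ?A k \<and> dist (x (Suc k)) (x k) < \<eta>/3"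
    using eventually_near_acc_points[OF bounded, of "\<eta>/3"] \<eta>(1)
      steps[THEN tendstoD, of "\<eta>/3"]
    unfolding near_def by (auto simp: eventually_conj_iff)
  then obtain M where M: "\<And>k. k \<ge> M \<Longrightarrow> near ?A k \<and> dist (x (Suc k)) (x k) < \<eta>/3"
    unfolding eventually_sequentially by blast
  have near_Un: "near ?A k \<longleftrightarrow> near U k \<or> near V k" for k
    unfolding near_def UV(5)[symmetric] by blast
  have stay: "near S k \<Longrightarrow> near S (Suc k)" if "S = U \<or> S = V" "k \<ge> M" for S k
    using that M[of k] M[of "Suc k"] apart[of k "Suc k"] apart[of "Suc k" k] near_Un[of "Suc k"]
    by (auto simp: dist_commute)
  have stays: "near S k" if "S = U \<or> S = V" "near S M" "k \<ge> M" for S k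
    using that(3) by (induction k rule: dec_induct) (use that stay in blast)+
  have visits: "\<exists>k\<ge>M. near S k" if ne: "S \<noteq> {}" and sub: "S \<subseteq> ?A" for S
  proof -
    obtain a where "a \<in> S" using ne by blast
    with sub have "a \<in> ?A" by blast
    then have "\<exists>\<^sub>F k in sequentially. dist (x k) a < \<eta>/3"
      using \<eta>(1) by (intro acc_pointsD) auto
    then show ?thesis using \<open>a \<in> S\<close> unfolding frequently_sequentially near_def by blast
  qed
  have "near U M \<or> near V M" using M[of M] near_Un by blast
  then show False
  proof
    assume "near U M"
    then obtain k where "k \<ge> M" "near V k" using visits[of V] UV(4,5) by blast
    then show False using stays[of U k] \<open>near U M\<close> apart[of k k] \<eta>(1) by auto
  next
    assume "near V M"
    then obtain k where "k \<ge> M" "near U k" using visits[of U] UV(3,5) by blast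
    then show False using stays[of V k] \<open>near V M\<close> apart[of k k] \<eta>(1) by auto
  qed
qed

lemma LIMSEQ_isolated_acc_point:
  fixes x :: "nat \<Rightarrow> 'a::heine_borel"
  assumes steps: "(\<lambda>k. dist (x (Suc k)) (x k)) \<longlonglongrightarrow> 0"
    and p: "p \<in> acc_points x"
    and isolated: "e > 0" "ball p e \<inter> acc_points x = {p}"
  shows "x \<longlonglongrightarrow> p"
proof (rule tendstoI)
  fix \<epsilon> :: real assume "\<epsilon> > 0"
  define \<eta> where "\<eta> = min \<epsilon> (e/2)"
  have \<eta>: "\<eta> > 0" "\<eta> \<le> \<epsilon>" "\<eta> < e" using \<open>\<epsilon> > 0\<close> isolated(1) by (auto simp: \<eta>_def)
  (* Late iterates avoid the annulus ?K and make steps shorter than its width,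
     so once inside ball p (\<eta>/2) they stay there. *)
  let ?K = "cball p \<eta> - ball p (\<eta>/2)"
  have "?K \<inter> acc_points x = {}"
  proof -
    have "?K \<subseteq> ball p e - {p}" using \<eta> by auto
    then show ?thesis using isolated(2) by blast
  qed
  then have "\<forall>\<^sub>F k in sequentially. x k \<notin> ?K \<and> dist (x (Suc k)) (x k) < \<eta>/2"
    using eventually_not_in_compact[of ?K x] steps[THEN tendstoD, of "\<eta>/2"] \<eta>(1)
    by (auto simp: compact_diff eventually_conj_iff)
  then obtain M where M: "\<And>k. k \<ge> M \<Longrightarrow> x k \<notin> ?K \<and> dist (x (Suc k)) (x k) < \<eta>/2"
    unfolding eventually_sequentially by blast
  obtain j where j: "j \<ge> M" "dist (x j) p < \<eta>/2"
    using acc_pointsD[OF p, of "\<eta>/2"] \<eta>(1) unfolding frequently_sequentially by auto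
  have trapped: "dist (x k) p < \<eta>/2" if "k \<ge> j" for k
    using that
  proof (induction k rule: dec_induct)
    case base then show ?case using j(2) .
  next
    case (step k)
    then have "dist (x (Suc k)) p < \<eta>"
      using M[of k] j(1) dist_triangle[of "x (Suc k)" p "x k"] by linarith
    then show ?case using M[of "Suc k"] step j(1) by (auto simp: dist_commute)
  qed
  show "\<forall>\<^sub>F k in sequentially. dist (x k) p < \<epsilon>"
    unfolding eventually_sequentially
  proof (intro exI allI impI)
    show "dist (x k) p < \<epsilon>" if "k \<ge> j" for k using trapped[OF that] \<eta> by linarith
  qed
qed


section \<open>Gradient associated directions\<close>

lemma gradient_associated_subseq:
  assumes "gradient_associated g x d" "strict_mono r" "(d \<circ> r) \<longlonglongrightarrow> 0"
  shows "(\<lambda>n. g (x (r n))) \<longlonglongrightarrow> 0"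
proof -
  have "infinite (range r)" using assms(2) by (simp add: range_inj_infinite strict_mono_imp_inj_on)
  moreover have "(d \<longlongrightarrow> 0) (filtermap r sequentially)"
    using assms(3) by (simp add: filterlim_filtermap o_def)
  ultimately have "((\<lambda>k. g (x k)) \<longlongrightarrow> 0) (filtermap r sequentially)"
    using assms(1) unfolding gradient_associated_def filtermap_strict_mono_sequentially[OF assms(2)]
    by blast
  then show ?thesis by (simp add: filterlim_filtermap o_def)
qed

lemma gradient_associated_tendsto_zero:
  assumes "gradient_associated g x d" "d \<longlonglongrightarrow> 0"
  shows "(\<lambda>k. g (x k)) \<longlonglongrightarrow> 0"
  using gradient_associated_subseq[of g x d id] assms by (simp add: strict_mono_id)

lemma gradient_associated_directions_bounded_below:
  assumes "gradient_associated g x d" "\<gamma> > 0" "\<And>k. k \<in> S \<Longrightarrow> \<gamma> \<le> norm (g (x k))"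
  shows "\<exists>c>0. \<forall>\<^sub>F k in sequentially. k \<in> S \<longrightarrow> c \<le> norm (d k)"
proof (rule ccontr)
  assume "\<not> ?thesis"
  then have "\<exists>\<^sub>F k in sequentially. k \<in> S \<and> norm (d k) < inverse (Suc n)" for n
    by (auto simp: not_eventually not_le)
  then obtain r where r: "strict_mono r" "\<And>n. r n \<in> S \<and> norm (d (r n)) < inverse (Suc n)"
    using strict_mono_choice_frequently[of "\<lambda>n k. k \<in> S \<and> norm (d k) < inverse (Suc n)"] by auto
  have "(d \<circ> r) \<longlonglongrightarrow> 0"
    using r(2) by (intro Lim_null_comparison[OF _ LIMSEQ_inverse_real_of_nat] always_eventually allI)
      (simp add: less_imp_le)
  then have "(\<lambda>n. g (x (r n))) \<longlonglongrightarrow> 0" by (rule gradient_associated_subseq[OF assms(1) r(1)])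
  then have "\<forall>\<^sub>F n in sequentially. norm (g (x (r n))) < \<gamma>"
    using assms(2) by (auto dest: tendstoD simp: dist_norm)
  then obtain n where "norm (g (x (r n))) < \<gamma>" using eventually_happens'[OF sequentially_bot] by blast
  then show False using assms(3) r(2)[of n] by fastforce
qed


section \<open>Descent methods\<close>

lemma L_descent_step:
  assumes "L_descent f g L" "L > 0" "0 \<le> s" "s \<le> (2 * \<kappa> - \<delta>) / L"
    and "g z \<bullet> v \<le> - \<kappa> * (norm v)\<^sup>2"
  shows "f (z + s *\<^sub>R v) \<le> f z - \<delta> / 2 * (s * (norm v)\<^sup>2)"
proof -
  have "f (z + s *\<^sub>R v) \<le> f z + g z \<bullet> (s *\<^sub>R v) + L / 2 * (norm (s *\<^sub>R v))\<^sup>2"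
    using assms(1) unfolding L_descent_def by (metis add_diff_cancel_left')
  also have "\<dots> = f z + s * (g z \<bullet> v) + L * s / 2 * (s * (norm v)\<^sup>2)"
    using assms(3) by (simp add: power2_eq_square)
  also have "\<dots> \<le> f z + s * (- \<kappa> * (norm v)\<^sup>2) + (2 * \<kappa> - \<delta>) / 2 * (s * (norm v)\<^sup>2)"
  proof -
    have "L * s \<le> 2 * \<kappa> - \<delta>" using assms(2,4) by (simp add: pos_le_divide_eq mult.commute)
    then show ?thesis using assms(3,5)
      by (intro add_mono mult_left_mono mult_right_mono) auto
  qed
  also have "\<dots> = f z - \<delta> / 2 * (s * (norm v)\<^sup>2)" by (simp add: field_simps)
  finally show ?thesis .
qed

lemma dist_steps_tendsto_zero:
  fixes x d :: "nat \<Rightarrow> 'a::real_normed_vector"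
  assumes iter: "\<And>k. x (Suc k) = x k + t k *\<^sub>R d k" and t_nonneg: "\<And>k. 0 \<le> t k"
    and t_bound: "\<forall>\<^sub>F k in sequentially. t k \<le> C"
    and energy: "summable (\<lambda>k. t k * (norm (d k))\<^sup>2)"
  shows "(\<lambda>k. dist (x (Suc k)) (x k)) \<longlonglongrightarrow> 0"
proof (rule tendsto_zero_if_norm_square_le)
  show "(\<lambda>k. C * (t k * (norm (d k))\<^sup>2)) \<longlonglongrightarrow> 0"
    by (intro tendsto_mult_right_zero summable_LIMSEQ_zero energy)
  have "(norm (dist (x (Suc k)) (x k)))\<^sup>2 = t k * (t k * (norm (d k))\<^sup>2)" for k
    using t_nonneg[of k] by (simp add: iter dist_norm power2_eq_square)
  then show "\<forall>\<^sub>F k in sequentially. (norm (dist (x (Suc k)) (x k)))\<^sup>2 \<le> C * (t k * (norm (d k))\<^sup>2)"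
    using t_bound by (elim eventually_mono) (simp add: mult_right_mono t_nonneg)
qed

lemma gradient_tendsto_zero_if_steps_bounded_below:
  assumes ga: "gradient_associated g x d"
    and t_lower: "\<epsilon> > 0" "\<And>k. \<epsilon> \<le> t k"
    and energy: "summable (\<lambda>k. t k * (norm (d k))\<^sup>2)"
  shows "(\<lambda>k. g (x k)) \<longlonglongrightarrow> 0"
proof (rule gradient_associated_tendsto_zero[OF ga], rule tendsto_zero_if_norm_square_le)
  show "(\<lambda>k. t k * (norm (d k))\<^sup>2 / \<epsilon>) \<longlonglongrightarrow> 0"
    by (intro tendsto_divide_zero summable_LIMSEQ_zero energy)
  have "\<epsilon> * (norm (d k))\<^sup>2 \<le> t k * (norm (d k))\<^sup>2" for k
    using t_lower(2) by (rule mult_right_mono) simp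
  then show "\<forall>\<^sub>F k in sequentially. (norm (d k))\<^sup>2 \<le> t k * (norm (d k))\<^sup>2 / \<epsilon>"
    using t_lower(1) by (simp add: pos_le_divide_eq mult.commute)
qed

lemma acc_point_stationary:
  fixes g :: "'a::euclidean_space \<Rightarrow> 'a" and x d :: "nat \<Rightarrow> 'a" and t :: "nat \<Rightarrow> real"
  assumes cont: "isCont g p"
    and iter: "\<And>k. x (Suc k) = x k + t k *\<^sub>R d k" and t_nonneg: "\<And>k. 0 \<le> t k"
    and ga: "gradient_associated g x d"
    and energy: "summable (\<lambda>k. t k * (norm (d k))\<^sup>2)"
    and not_summable: "\<not> summable t"
    and p: "p \<in> acc_points x"
  shows "g p = 0"
proof (rule ccontr)
  assume "g p \<noteq> 0"
  then have "norm (g p) / 2 > 0" by simp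
  then obtain \<epsilon> where \<epsilon>: "\<epsilon> > 0"
    and close: "\<And>y. dist y p < \<epsilon> \<Longrightarrow> dist (g y) (g p) < norm (g p) / 2"
    using cont unfolding continuous_at_eps_delta by blast
  have far_from_zero: "norm (g p) / 2 \<le> norm (g y)" if "dist y p < \<epsilon>" for y
    using close[OF that] norm_triangle_sub[of "g p" "g y"] by (simp add: dist_norm norm_minus_commute)
  obtain c where c: "c > 0" "\<forall>\<^sub>F k in sequentially. dist (x k) p < \<epsilon> \<longrightarrow> c \<le> norm (d k)"
    using gradient_associated_directions_bounded_below[OF ga, of "norm (g p) / 2" "{k. dist (x k) p < \<epsilon>}"]
      far_from_zero \<open>g p \<noteq> 0\<close> by auto
  define s where "s k = t k * (norm (d k))\<^sup>2 / c" for k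
  have s_nonneg: "0 \<le> s k" for k using c(1) t_nonneg[of k] by (simp add: s_def)
  have "summable s" unfolding s_def using energy by (rule summable_divide)
  note s = s_nonneg this
  have moves: "dist (x (Suc k)) (x k) \<le> s k" and t_le: "t k \<le> s k / c"
    if "c \<le> norm (d k)" for k
  proof -
    have "0 \<le> t k * norm (d k)" using t_nonneg[of k] by simp
    from mult_right_mono[OF that this]
    have energy_ge: "c * (t k * norm (d k)) \<le> t k * (norm (d k))\<^sup>2"
      by (simp add: power2_eq_square mult_ac)
    have "t k * c \<le> t k * norm (d k)" using that t_nonneg[of k] by (rule mult_left_mono)
    then have "c * (c * t k) \<le> c * (t k * norm (d k))" using c(1) by (simp add: mult.commute)
    with energy_ge have "c * (c * t k) \<le> t k * (norm (d k))\<^sup>2" by linarith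
    with c(1) show "t k \<le> s k / c" by (simp add: s_def field_simps)
    show "dist (x (Suc k)) (x k) \<le> s k"
      using energy_ge c(1) t_nonneg[of k] by (simp add: iter dist_norm s_def field_simps)
  qed
  have "\<forall>\<^sub>F m in sequentially. (\<Sum>i. s (i + m)) < \<epsilon> / 2"
    using suminf_exist_split2[OF s(2), THEN tendstoD, of "\<epsilon> / 2"] \<epsilon>(1)
    by (auto elim!: eventually_mono)
  moreover have "\<forall>\<^sub>F m in sequentially. \<forall>k\<ge>m. dist (x k) p < \<epsilon> \<longrightarrow> c \<le> norm (d k)"
    using c(2) by (rule eventually_all_ge_at_top)
  ultimately have "\<forall>\<^sub>F m in sequentially. (\<Sum>i. s (i + m)) < \<epsilon> / 2
      \<and> (\<forall>k\<ge>m. dist (x k) p < \<epsilon> \<longrightarrow> c \<le> norm (d k))"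
    by (rule eventually_conj)
  with acc_pointsD[OF p, of "\<epsilon> / 2"] \<epsilon>(1)
  have "\<exists>\<^sub>F m in sequentially. dist (x m) p < \<epsilon> / 2 \<and> (\<Sum>i. s (i + m)) < \<epsilon> / 2
      \<and> (\<forall>k\<ge>m. dist (x k) p < \<epsilon> \<longrightarrow> c \<le> norm (d k))"
    by (auto dest: frequently_eventually_frequently)
  then obtain m where m: "dist (x m) p < \<epsilon> / 2" "(\<Sum>i. s (i + m)) < \<epsilon> / 2"
    "\<And>k. k \<ge> m \<Longrightarrow> dist (x k) p < \<epsilon> \<Longrightarrow> c \<le> norm (d k)"
    using frequently_ex by blast
  have "dist (x k) p < \<epsilon>" if "k \<ge> m" for k
    using trapped_in_ball[OF _ s, of m x p \<epsilon> k] m moves that by auto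
  then have "\<forall>\<^sub>F k in sequentially. norm (t k) \<le> s k / c"
    using m(3) t_le t_nonneg unfolding eventually_sequentially by auto
  then have "summable t" using s(2) by (rule summable_comparison_test_ev[OF _ summable_divide])
  then show False using not_summable by contradiction
qed

theorem mainTheorem3:
  fixes f :: "'a::euclidean_space \<Rightarrow> real" and g :: "'a \<Rightarrow> 'a"
    and x d :: "nat \<Rightarrow> 'a" and t :: "nat \<Rightarrow> real"
    and L \<kappa> \<delta> :: real and N :: nat
  assumes grad: "\<And>z. (f has_derivative (\<lambda>h. g z \<bullet> h)) (at z)"
    and grad_cont: "continuous_on UNIV g"
    and iter: "\<And>k. x (Suc k) = x k + t k *\<^sub>R d k"
    and t_nonneg: "\<And>k. t k \<ge> 0"
    and bdd: "bdd_below (range (\<lambda>k. f (x k)))"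
    and L_pos: "L > 0" and descent: "L_descent f g L"
    and ga: "gradient_associated g x d"
    and kappa_pos: "\<kappa> > 0"
    and suff_desc: "\<And>k. g (x k) \<bullet> d k \<le> - \<kappa> * (norm (d k))\<^sup>2"
    and t_div: "filterlim (\<lambda>n. \<Sum>k=1..n. t k) at_top sequentially"
    and delta: "0 < \<delta>" "\<delta> < 2 * \<kappa>"
    and t_bound: "\<And>k. k \<ge> N \<Longrightarrow> t k \<le> (2 * \<kappa> - \<delta>) / L"
  shows "(\<forall>p \<in> acc_points x. g p = 0)
    \<and> (bounded (range x) \<longrightarrow>
         acc_points x \<noteq> {} \<and> compact (acc_points x) \<and> connected (acc_points x))
    \<and> (\<forall>p \<in> acc_points x. (\<exists>e>0. ball p e \<inter> acc_points x = {p}) \<longrightarrow> x \<longlonglongrightarrow> p)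
    \<and> ((\<exists>\<epsilon>>0. \<forall>k. t k \<ge> \<epsilon>) \<longrightarrow> (\<lambda>k. g (x k)) \<longlonglongrightarrow> 0)"
proof -
  have energy: "summable (\<lambda>k. t k * (norm (d k))\<^sup>2)"
  proof (rule summable_of_sufficient_decrease[OF bdd, of "\<delta> / 2" _ N])
    show "f (x (Suc k)) \<le> f (x k) - \<delta> / 2 * (t k * (norm (d k))\<^sup>2)" if "k \<ge> N" for k
      unfolding iter by (rule L_descent_step[OF descent L_pos t_nonneg t_bound[OF that] suff_desc])
  qed (use delta(1) t_nonneg in auto)
  have steps: "(\<lambda>k. dist (x (Suc k)) (x k)) \<longlonglongrightarrow> 0"
    using t_bound
    by (intro dist_steps_tendsto_zero[OF iter t_nonneg _ energy]) (auto simp: eventually_sequentially)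
  have stationary: "g p = 0" if "p \<in> acc_points x" for p
    using grad_cont that partial_sums_at_top_imp_not_summable[OF t_div]
    by (intro acc_point_stationary[OF _ iter t_nonneg ga energy]) (auto simp: continuous_on_eq_continuous_at)
  show ?thesis
    using stationary acc_points_nonempty compact_acc_points connected_acc_points[OF _ steps]
      LIMSEQ_isolated_acc_point[OF steps] gradient_tendsto_zero_if_steps_bounded_below[OF ga _ _ energy]
    by blast
qed

end
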